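(* Let $D$ be a connected ribbon with $n$ boxes and length $\ell$, and write $\mathfrak r_D=\sum_{\lambda\in OP(n)}c_\lambda p_\lambda$. Then: (a) $\sum_{\lambda\in OP(n)}c_\lambda=2$. (b) If $n$ is odd, then $c_{(n)}=(-1)^{\ell+1}\,2/n$. (c) If $\alpha_1(D)=1$ and $\alpha_\ell(D)>1$, then $\sum_{\lambda\in OP(n)}m_1(\lambda)c_\lambda=8c(D)$. (d) If $\alpha_1(D)=\alpha_\ell(D)=1$ and $n\ge2$, then $\sum_{\lambda\in OP(n)}m_1(\lambda)c_\lambda=8c(D)-4$.
   Context: Boxes $(i,j)$ are indexed by row $i$ (top to bottom) and column $j$. A connected ribbon $D$ of composition $\alpha(D)=(\alpha_1(D),\dots,\alpha_\ell(D))$ has $\alpha_r(D)$ consecutive boxes in row $r$, with the leftmost box of row $r$ directly above the rightmost box of row $r+1$; $\ell$ is its length. A box $(i,j)$ of $D$ is a corner if $(i-1,j)\in D$ and $(i+1,j)\notin D$; $c(D)$ is the number of corners. $\mathfrak r_D=\sum_T x^{c(T)}$ over fillings $T$ of $D$ with letters of $\{1'<1<2'<2<\cdots\}$ having rows and columns weakly increasing, at most one unmarked $k$ per column and at most one marked $k'$ per row; $c(T)_i$ counts entries $i$ or $i'$. $\mathfrak r_D$ expands uniquely in $\{p_\lambda:\lambda\in OP(n)\}$, $OP(n)$ being partitions of $n$ into odd parts; $m_1(\lambda)$ is the number of parts of $\lambda$ equal to $1$. *)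

theory Defs
  imports Complex_Main
begin

(* A connected ribbon is given by its composition alpha = [alpha_1,...,alpha_l]
   (all parts positive).  Rows are numbered 1..l from top to bottom, columns
   from 0.  Row i occupies the columns ribbon_start alpha i .. ribbon_start alpha i + alpha_i - 1,
   where the bottom row l starts in column 0 and the leftmost box of row r
   sits directly above the rightmost box of row r+1. *)

definition ribbon_start :: "nat list \<Rightarrow> nat \<Rightarrow> nat" where
  "ribbon_start alpha i = (\<Sum>k\<in>{i+1..length alpha}. alpha ! (k-1) - 1)"

definition ribbon_boxes :: "nat list \<Rightarrow> (nat \<times> nat) set" where
  "ribbon_boxes alpha = {(i,j). 1 \<le> i \<and> i \<le> length alpha \<and>
      ribbon_start alpha i \<le> j \<and> j < ribbon_start alpha i + alpha ! (i-1)}"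

(* c(D): boxes (i,j) with (i-1,j) in D and (i+1,j) not in D (row 0 is empty) *)
definition ribbon_corners :: "nat list \<Rightarrow> nat" where
  "ribbon_corners alpha = card {(i,j). (i,j) \<in> ribbon_boxes alpha \<and>
      (i-1,j) \<in> ribbon_boxes alpha \<and> (i+1,j) \<notin> ribbon_boxes alpha}"

(* Letters 1' < 1 < 2' < 2 < ... are encoded as positive naturals:
   k' = 2k-1 (marked, odd), k = 2k (unmarked, even). *)
definition is_filling :: "nat list \<Rightarrow> (nat \<times> nat \<Rightarrow> nat) \<Rightarrow> bool" where
  "is_filling alpha T \<longleftrightarrow>
     (\<forall>b. b \<notin> ribbon_boxes alpha \<longrightarrow> T b = 0) \<and>
     (\<forall>b\<in>ribbon_boxes alpha. 1 \<le> T b) \<and>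
     (\<forall>i j j'. (i,j) \<in> ribbon_boxes alpha \<and> (i,j') \<in> ribbon_boxes alpha \<and> j < j'
         \<longrightarrow> T (i,j) \<le> T (i,j')) \<and>
     (\<forall>i i' j. (i,j) \<in> ribbon_boxes alpha \<and> (i',j) \<in> ribbon_boxes alpha \<and> i < i'
         \<longrightarrow> T (i,j) \<le> T (i',j)) \<and>
     (\<forall>i i' j. (i,j) \<in> ribbon_boxes alpha \<and> (i',j) \<in> ribbon_boxes alpha \<and> i \<noteq> i'
         \<and> T (i,j) = T (i',j) \<longrightarrow> odd (T (i,j))) \<and>
     (\<forall>i j j'. (i,j) \<in> ribbon_boxes alpha \<and> (i,j') \<in> ribbon_boxes alpha \<and> j \<noteq> j'
         \<and> T (i,j) = T (i,j') \<longrightarrow> even (T (i,j)))"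

(* c(T)_k: number of entries k or k' *)
definition filling_content :: "nat list \<Rightarrow> (nat \<times> nat \<Rightarrow> nat) \<Rightarrow> nat \<Rightarrow> nat" where
  "filling_content alpha T k = card {b \<in> ribbon_boxes alpha. (T b + 1) div 2 = k}"

(* coefficient of the monomial x^a (a : variable index \<Rightarrow> exponent, variables x_1,x_2,...)
   in r_D *)
definition ribbon_coeff :: "nat list \<Rightarrow> (nat \<Rightarrow> nat) \<Rightarrow> nat" where
  "ribbon_coeff alpha a = card {T. is_filling alpha T \<and> (\<forall>k. filling_content alpha T k = a k)}"

definition odd_partitions :: "nat \<Rightarrow> nat list set" where
  "odd_partitions n = {lam. sorted_wrt (\<ge>) lam \<and> (\<forall>p\<in>set lam. odd p) \<and> sum_list lam = n}"

(* coefficient of x^a in p_lam = prod_i (sum_{v\<ge>1} x_v^(lam_i)) : number of choices of a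
   variable v_i \<ge> 1 for each part such that the resulting monomial is x^a *)
definition power_sum_coeff :: "nat list \<Rightarrow> (nat \<Rightarrow> nat) \<Rightarrow> nat" where
  "power_sum_coeff lam a = card {vs. length vs = length lam \<and> (\<forall>v\<in>set vs. 1 \<le> v) \<and>
      (\<forall>j. a j = (\<Sum>i\<in>{i. i < length lam \<and> vs ! i = j}. lam ! i))}"

definition is_p_expansion :: "nat list \<Rightarrow> (nat list \<Rightarrow> real) \<Rightarrow> bool" where
  "is_p_expansion alpha c \<longleftrightarrow>
     (\<forall>a :: nat \<Rightarrow> nat. finite {k. a k \<noteq> 0} \<longrightarrow>
        real (ribbon_coeff alpha a) =
          (\<Sum>lam\<in>odd_partitions (sum_list alpha). c lam * real (power_sum_coeff lam a)))"

end

theory Submission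
  imports Defs
begin

text \<open>
  Both sides of the p-expansion are paired with test functions in two variables. At the monomial
  x_1^(n-j) x_2^j, p_lam counts the colourings of the parts of lam by 1 and 2 in which the parts
  coloured 2 sum to j, while r_D counts the fillings with letters 1' 1 2' 2 having j letters from
  {2', 2}. Reading a filling row by row turns it into a word whose consecutive letters obey one of
  two local rules, depending on whether the next letter lies in the same row or starts the next
  row; so weighted counts of these words can be computed by a transfer recursion along the
  composition that only remembers the last letter. Weighting by the indicators of j = 0 and j = 1,
  by (-1)^j and by j (-1)^(j+1) turns the p-side into the sum of the c_lam, the sum of the
  m_1(lam) c_lam, 0 and n c_(n), and the recursion evaluates the word side in closed form.
\<close>

section \<open>Ribbons and their corners\<close>

lemma ribbon_start_Cons_Suc: "ribbon_start (x # rest) (Suc i) = ribbon_start rest i"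
proof -
  have "ribbon_start (x # rest) (Suc i) = (\<Sum>k\<in>{i+1..length rest}. (x # rest) ! (Suc k - 1) - 1)"
    unfolding ribbon_start_def by (simp only: length_Cons add_Suc sum.shift_bounds_cl_Suc_ivl)
  also have "\<dots> = ribbon_start rest i"
    unfolding ribbon_start_def by (rule sum.cong) (auto simp: nth_Cons')
  finally show ?thesis .
qed

lemma ribbon_start_Cons_0: "ribbon_start (x # rest) 0 = (x - 1) + ribbon_start rest 0"
proof -
  have "{1..Suc (length rest)} = insert 1 {Suc 1..Suc (length rest)}" by auto
  then have "ribbon_start (x # rest) 0 = (x - 1) + ribbon_start (x # rest) 1"
    by (simp add: ribbon_start_def)
  then show ?thesis by (simp add: ribbon_start_Cons_Suc[where i = 0, simplified])
qed

lemma ribbon_boxes_Nil [simp]: "ribbon_boxes [] = {}"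
  by (auto simp: ribbon_boxes_def)

lemma ribbon_box_row_pos: "(i, j) \<in> ribbon_boxes alpha \<Longrightarrow> 1 \<le> i"
  by (auto simp: ribbon_boxes_def)

lemma mem_ribbon_boxes_Cons:
  "(i, j) \<in> ribbon_boxes (x # rest) \<longleftrightarrow>
     (i = 1 \<and> ribbon_start rest 0 \<le> j \<and> j < ribbon_start rest 0 + x) \<or>
     (2 \<le> i \<and> (i - 1, j) \<in> ribbon_boxes rest)"
proof (cases i)
  case (Suc k)
  then show ?thesis
    by (cases k) (auto simp: ribbon_boxes_def ribbon_start_Cons_Suc)
qed (simp add: ribbon_boxes_def)

lemma ribbon_boxes_Cons:
  "ribbon_boxes (x # rest) = (\<lambda>(i, j). (Suc i, j)) ` ribbon_boxes rest \<union>
     (\<lambda>j. (1, j)) ` {ribbon_start rest 0..<ribbon_start rest 0 + x}"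
proof -
  have shift: "(Suc k, j) \<in> (\<lambda>(i, j). (Suc i, j)) ` ribbon_boxes rest \<longleftrightarrow> (k, j) \<in> ribbon_boxes rest"
    for k j by force
  have "(i, j) \<in> (\<lambda>(i, j). (Suc i, j)) ` ribbon_boxes rest \<longleftrightarrow> 2 \<le> i \<and> (i - 1, j) \<in> ribbon_boxes rest"
    for i j using ribbon_box_row_pos[of _ j rest] by (cases i) (auto simp: shift)
  then show ?thesis
    unfolding set_eq_iff split_paired_All mem_ribbon_boxes_Cons by auto
qed

lemma finite_ribbon_boxes: "finite (ribbon_boxes alpha)"
  by (induction alpha) (simp_all add: ribbon_boxes_Cons)

lemma ribbon_box_col_le:
  "\<forall>p\<in>set alpha. 0 < p \<Longrightarrow> (i, j) \<in> ribbon_boxes alpha \<Longrightarrow> j \<le> ribbon_start alpha 0"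
proof (induction alpha arbitrary: i j)
  case (Cons x rest)
  then have "j < ribbon_start rest 0 + x \<or> j \<le> ribbon_start rest 0"
    by (auto simp: mem_ribbon_boxes_Cons)
  then show ?case using Cons.prems(1) by (auto simp: ribbon_start_Cons_0)
qed simp

lemma ribbon_top_right_box:
  "\<forall>p\<in>set alpha. 0 < p \<Longrightarrow> alpha \<noteq> [] \<Longrightarrow> (1, ribbon_start alpha 0) \<in> ribbon_boxes alpha"
  by (cases alpha) (auto simp: mem_ribbon_boxes_Cons ribbon_start_Cons_0)

definition corner_boxes :: "nat list \<Rightarrow> (nat \<times> nat) set" where
  "corner_boxes alpha = {(i, j). (i, j) \<in> ribbon_boxes alpha \<and> (i - 1, j) \<in> ribbon_boxes alpha \<and>
      (i + 1, j) \<notin> ribbon_boxes alpha}"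

lemma ribbon_corners_eq_card: "ribbon_corners alpha = card (corner_boxes alpha)"
  by (simp add: ribbon_corners_def corner_boxes_def)

lemma finite_corner_boxes: "finite (corner_boxes alpha)"
  by (rule finite_subset[OF _ finite_ribbon_boxes]) (auto simp: corner_boxes_def)

lemma corner_box_row: "(i, j) \<in> corner_boxes alpha \<Longrightarrow> 2 \<le> i"
  using ribbon_box_row_pos[of "i - 1" j alpha] ribbon_box_row_pos[of i j alpha]
  by (auto simp: corner_boxes_def)

lemma corner_boxes_Cons:
  fixes rest :: "nat list"
  assumes x: "0 < x" and pos: "\<forall>p\<in>set rest. 0 < p"
  defines "s \<equiv> ribbon_start rest 0"
  shows "corner_boxes (x # rest) = (\<lambda>(i, j). (Suc i, j)) ` corner_boxes rest \<union>
    (if (1, s) \<in> ribbon_boxes rest \<and> (2, s) \<notin> ribbon_boxes rest then {(2, s)} else {})"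
proof -
  have shifted: "(i, j) \<in> (\<lambda>(i, j). (Suc i, j)) ` corner_boxes rest \<longleftrightarrow>
      3 \<le> i \<and> (i - 1, j) \<in> corner_boxes rest"
    for i j using corner_box_row by (cases i) force+
  have "(i, j) \<in> corner_boxes (x # rest) \<longleftrightarrow>
      3 \<le> i \<and> (i - 1, j) \<in> corner_boxes rest \<or>
      (i, j) = (2, s) \<and> (1, s) \<in> ribbon_boxes rest \<and> (2, s) \<notin> ribbon_boxes rest" for i j
  proof -
    consider "i \<le> 1" | "i = 2" | "3 \<le> i" by linarith
    then show ?thesis
    proof cases
      case 1
      then show ?thesis
        using ribbon_box_row_pos[of 0 j "x # rest"] by (auto simp: corner_boxes_def le_Suc_eq)
    next
      case 2
      have "(2, j) \<in> corner_boxes (x # rest) \<longleftrightarrow>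
          s \<le> j \<and> j < s + x \<and> (1, j) \<in> ribbon_boxes rest \<and> (2, j) \<notin> ribbon_boxes rest"
        by (auto simp: corner_boxes_def mem_ribbon_boxes_Cons s_def)
      also have "\<dots> \<longleftrightarrow> j = s \<and> (1, s) \<in> ribbon_boxes rest \<and> (2, s) \<notin> ribbon_boxes rest"
        using ribbon_box_col_le[OF pos, of 1 j] x by (auto simp: s_def)
      finally show ?thesis using 2 by auto
    next
      case 3
      then show ?thesis
        by (auto simp: corner_boxes_def mem_ribbon_boxes_Cons)
    qed
  qed
  then show ?thesis
    unfolding set_eq_iff split_paired_All Un_iff shifted by auto
qed

lemma ribbon_corners_Cons:
  assumes x: "0 < x" and pos: "\<forall>p\<in>set rest. 0 < p"
  shows "ribbon_corners (x # rest) =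
    ribbon_corners rest + (if rest \<noteq> [] \<and> \<not> (tl rest \<noteq> [] \<and> hd rest = 1) then 1 else 0)"
proof -
  define s where "s = ribbon_start rest 0"
  define E :: "(nat \<times> nat) set" where
    "E = (if (1, s) \<in> ribbon_boxes rest \<and> (2, s) \<notin> ribbon_boxes rest then {(2, s)} else {})"
  have E: "E = (if rest \<noteq> [] \<and> \<not> (tl rest \<noteq> [] \<and> hd rest = 1) then {(2, s)} else {})"
  proof (cases rest)
    case (Cons y rest')
    have y: "0 < y" using pos Cons by simp
    have "(1, s) \<in> ribbon_boxes rest"
      using ribbon_top_right_box[OF pos] Cons s_def by simp
    moreover have "(2, s) \<in> ribbon_boxes rest \<longleftrightarrow> rest' \<noteq> [] \<and> y = 1"
    proof -
      have "(2, s) \<in> ribbon_boxes rest \<longleftrightarrow> (1, s) \<in> ribbon_boxes rest'"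
        by (simp add: Cons mem_ribbon_boxes_Cons)
      also have "\<dots> \<longleftrightarrow> rest' \<noteq> [] \<and> y = 1"
        using ribbon_box_col_le[of rest' 1 s] ribbon_top_right_box[of rest'] pos y
        by (auto simp: Cons s_def ribbon_start_Cons_0)
      finally show ?thesis .
    qed
    ultimately show ?thesis by (auto simp: E_def Cons)
  qed (simp add: E_def)
  have "corner_boxes (x # rest) = (\<lambda>(i, j). (Suc i, j)) ` corner_boxes rest \<union> E"
    using corner_boxes_Cons[OF x pos] by (simp add: s_def E_def)
  moreover have "(\<lambda>(i, j). (Suc i, j)) ` corner_boxes rest \<inter> E = {}"
    using corner_box_row[of 1 s rest] by (auto simp: E_def)
  moreover have "card ((\<lambda>(i, j). (Suc i, j)) ` corner_boxes rest) = card (corner_boxes rest)"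
    by (rule card_image) (auto simp: inj_on_def)
  ultimately have "card (corner_boxes (x # rest)) = card (corner_boxes rest) + card E"
    by (simp add: card_Un_disjoint finite_corner_boxes E)
  then show ?thesis
    unfolding ribbon_corners_eq_card E by simp
qed

lemma ribbon_corners_single_row: "0 < x \<Longrightarrow> ribbon_corners [x] = 0"
  using ribbon_corners_Cons[of x "[]"] by (simp add: ribbon_corners_eq_card corner_boxes_def)

section \<open>Fillings as reading words\<close>

text \<open>
  Reading a filling row by row from the bottom up, each row from left to right, a letter v follows
  u either as its right neighbour in the same row, which is allowed iff \<open>row_step u v\<close>, or as the
  first box of the next row, which lies directly above u and is allowed iff \<open>col_step u v\<close>.
\<close>

definition row_step :: "nat \<Rightarrow> nat \<Rightarrow> bool" where
  "row_step u v \<longleftrightarrow> u < v \<or> (u = v \<and> even u)"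

definition col_step :: "nat \<Rightarrow> nat \<Rightarrow> bool" where
  "col_step u v \<longleftrightarrow> v < u \<or> (v = u \<and> odd u)"

lemma transp_row_step: "transp row_step"
  by (auto simp: transp_def row_step_def)

lemma transp_col_step: "transp col_step"
  by (auto simp: transp_def col_step_def)

definition tableau_on :: "(nat \<times> nat) set \<Rightarrow> (nat \<times> nat \<Rightarrow> nat) \<Rightarrow> bool" where
  "tableau_on B T \<longleftrightarrow> (\<forall>b. 0 < T b \<longleftrightarrow> b \<in> B) \<and>
     (\<forall>i j j'. (i, j) \<in> B \<and> (i, j') \<in> B \<and> j < j' \<longrightarrow> row_step (T (i, j)) (T (i, j'))) \<and>
     (\<forall>i i' j. (i, j) \<in> B \<and> (i', j) \<in> B \<and> i < i' \<longrightarrow> col_step (T (i', j)) (T (i, j)))"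

lemma row_conditions_iff_row_step:
  fixes B :: "(nat \<times> nat) set" and T :: "nat \<times> nat \<Rightarrow> nat"
  shows "(\<forall>i j j'. (i, j) \<in> B \<and> (i, j') \<in> B \<and> j < j' \<longrightarrow> T (i, j) \<le> T (i, j')) \<and>
        (\<forall>i j j'. (i, j) \<in> B \<and> (i, j') \<in> B \<and> j \<noteq> j' \<and> T (i, j) = T (i, j') \<longrightarrow> even (T (i, j)))
      \<longleftrightarrow> (\<forall>i j j'. (i, j) \<in> B \<and> (i, j') \<in> B \<and> j < j' \<longrightarrow> row_step (T (i, j)) (T (i, j')))"
  (is "?le \<and> ?ev \<longleftrightarrow> ?step")
proof
  assume le_ev: "?le \<and> ?ev"
  show ?step
  proof (intro allI impI)
    fix i j j' assume "(i, j) \<in> B \<and> (i, j') \<in> B \<and> j < j'"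
    with le_ev show "row_step (T (i, j)) (T (i, j'))"
      unfolding row_step_def by (metis le_neq_implies_less less_irrefl)
  qed
next
  assume step: ?step
  then have ?le unfolding row_step_def by (metis le_eq_less_or_eq)
  moreover have ?ev
  proof (intro allI impI)
    fix i j j' assume "(i, j) \<in> B \<and> (i, j') \<in> B \<and> j \<noteq> j' \<and> T (i, j) = T (i, j')"
    then show "even (T (i, j))"
      using step unfolding row_step_def by (metis less_irrefl nat_neq_iff)
  qed
  ultimately show "?le \<and> ?ev" ..
qed

lemma col_conditions_iff_col_step:
  fixes B :: "(nat \<times> nat) set" and T :: "nat \<times> nat \<Rightarrow> nat"
  shows "(\<forall>i i' j. (i, j) \<in> B \<and> (i', j) \<in> B \<and> i < i' \<longrightarrow> T (i, j) \<le> T (i', j)) \<and>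
        (\<forall>i i' j. (i, j) \<in> B \<and> (i', j) \<in> B \<and> i \<noteq> i' \<and> T (i, j) = T (i', j) \<longrightarrow> odd (T (i, j)))
      \<longleftrightarrow> (\<forall>i i' j. (i, j) \<in> B \<and> (i', j) \<in> B \<and> i < i' \<longrightarrow> col_step (T (i', j)) (T (i, j)))"
  (is "?le \<and> ?odd \<longleftrightarrow> ?step")
proof
  assume le_odd: "?le \<and> ?odd"
  show ?step
  proof (intro allI impI)
    fix i i' j assume "(i, j) \<in> B \<and> (i', j) \<in> B \<and> i < i'"
    with le_odd show "col_step (T (i', j)) (T (i, j))"
      unfolding col_step_def by (metis le_neq_implies_less less_irrefl)
  qed
next
  assume step: ?step
  then have ?le unfolding col_step_def by (metis le_eq_less_or_eq)
  moreover have ?odd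
  proof (intro allI impI)
    fix i i' j assume "(i, j) \<in> B \<and> (i', j) \<in> B \<and> i \<noteq> i' \<and> T (i, j) = T (i', j)"
    then show "odd (T (i, j))"
      using step unfolding col_step_def by (metis less_irrefl nat_neq_iff)
  qed
  ultimately show "?le \<and> ?odd" ..
qed

lemma is_filling_iff_tableau_on: "is_filling alpha T \<longleftrightarrow> tableau_on (ribbon_boxes alpha) T"
proof -
  have support: "(\<forall>b. b \<notin> B \<longrightarrow> T b = 0) \<and> (\<forall>b\<in>B. 1 \<le> T b) \<longleftrightarrow> (\<forall>b. 0 < T b \<longleftrightarrow> b \<in> B)"
    for B by (metis One_nat_def Suc_le_eq gr0I less_numeral_extra(3))
  show ?thesis
    unfolding is_filling_def tableau_on_def support[symmetric] row_conditions_iff_row_step[symmetric]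
      col_conditions_iff_col_step[symmetric]
    by (simp only: conj_ac)
qed

lemma sorted_wrt_upt_iff:
  "sorted_wrt P [m..<n] \<longleftrightarrow> (\<forall>i j. m \<le> i \<and> i < j \<and> j < n \<longrightarrow> P i j)"
proof (induction n)
  case (Suc n)
  then show ?case
    by (cases "m \<le> n") (auto simp: sorted_wrt_append less_Suc_eq)
qed simp

definition shift_down :: "(nat \<times> nat \<Rightarrow> nat) \<Rightarrow> nat \<times> nat \<Rightarrow> nat" where
  "shift_down T = (\<lambda>(i, j). if i = 0 then 0 else T (Suc i, j))"

lemma shift_down_apply [simp]: "1 \<le> i \<Longrightarrow> shift_down T (i, j) = T (Suc i, j)"
  by (simp add: shift_down_def)

lemma support_ribbon_Cons:
  fixes rest :: "nat list"
  defines "s \<equiv> ribbon_start rest 0"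
  shows "(\<forall>b. 0 < T b \<longleftrightarrow> b \<in> ribbon_boxes (x # rest)) \<longleftrightarrow>
    (\<forall>j. T (0, j) = 0) \<and> (\<forall>j. 0 < T (1, j) \<longleftrightarrow> s \<le> j \<and> j < s + x) \<and>
    (\<forall>b. 0 < shift_down T b \<longleftrightarrow> b \<in> ribbon_boxes rest)"
    (is "?L \<longleftrightarrow> ?R")
proof
  assume L: ?L
  have "0 < shift_down T (i, j) \<longleftrightarrow> (i, j) \<in> ribbon_boxes rest" for i j
    using L[rule_format, of "(Suc i, j)"] ribbon_box_row_pos[of 0 j rest]
    by (cases i) (auto simp: shift_down_def mem_ribbon_boxes_Cons)
  then show ?R
    using L[rule_format, of "(0, _)"] L[rule_format, of "(1, _)"]
    by (auto simp: mem_ribbon_boxes_Cons s_def)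
next
  assume R: ?R
  have "0 < T (i, j) \<longleftrightarrow> (i, j) \<in> ribbon_boxes (x # rest)" for i j
  proof (cases "2 \<le> i")
    case True
    then show ?thesis
      using R[THEN conjunct2, THEN conjunct2, rule_format, of "(i - 1, j)"]
      by (auto simp: mem_ribbon_boxes_Cons)
  next
    case False
    then have "i = 0 \<or> i = 1" by auto
    then show ?thesis
      using R by (auto simp: mem_ribbon_boxes_Cons s_def)
  qed
  then show ?L by auto
qed

lemma rows_ribbon_Cons:
  fixes rest :: "nat list"
  defines "s \<equiv> ribbon_start rest 0"
  shows "(\<forall>i j j'. (i, j) \<in> ribbon_boxes (x # rest) \<and> (i, j') \<in> ribbon_boxes (x # rest) \<and> j < j'
        \<longrightarrow> row_step (T (i, j)) (T (i, j'))) \<longleftrightarrow>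
    sorted_wrt row_step (map (\<lambda>j. T (1, j)) [s..<s + x]) \<and>
    (\<forall>i j j'. (i, j) \<in> ribbon_boxes rest \<and> (i, j') \<in> ribbon_boxes rest \<and> j < j'
        \<longrightarrow> row_step (shift_down T (i, j)) (shift_down T (i, j')))"
    (is "?L \<longleftrightarrow> ?top \<and> ?low")
proof
  assume L: ?L
  have ?top
    unfolding sorted_wrt_map sorted_wrt_upt_iff
    using L[rule_format, of 1] by (auto simp: mem_ribbon_boxes_Cons s_def)
  moreover have ?low
  proof (intro allI impI)
    fix i j j' assume "(i, j) \<in> ribbon_boxes rest \<and> (i, j') \<in> ribbon_boxes rest \<and> j < j'"
    then show "row_step (shift_down T (i, j)) (shift_down T (i, j'))"
      using L[rule_format, of "Suc i" j j'] ribbon_box_row_pos[of i j rest]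
      by (auto simp: mem_ribbon_boxes_Cons)
  qed
  ultimately show "?top \<and> ?low" ..
next
  assume R: "?top \<and> ?low"
  show ?L
  proof (intro allI impI)
    fix i j j'
    assume "(i, j) \<in> ribbon_boxes (x # rest) \<and> (i, j') \<in> ribbon_boxes (x # rest) \<and> j < j'"
    then consider "i = 1" "s \<le> j" "j < j'" "j' < s + x"
      | "2 \<le> i" "(i - 1, j) \<in> ribbon_boxes rest" "(i - 1, j') \<in> ribbon_boxes rest" "j < j'"
      by (auto simp: mem_ribbon_boxes_Cons s_def)
    then show "row_step (T (i, j)) (T (i, j'))"
    proof cases
      case 1
      with R show ?thesis unfolding sorted_wrt_map sorted_wrt_upt_iff by auto
    next
      case 2
      with R have "row_step (shift_down T (i - 1, j)) (shift_down T (i - 1, j'))" by blast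
      with 2 show ?thesis by (simp add: Suc_diff_le)
    qed
  qed
qed

lemma cols_ribbon_Cons:
  fixes rest :: "nat list"
  assumes x: "0 < x" and pos: "\<forall>p\<in>set rest. 0 < p"
  defines "s \<equiv> ribbon_start rest 0"
  shows "(\<forall>i i' j. (i, j) \<in> ribbon_boxes (x # rest) \<and> (i', j) \<in> ribbon_boxes (x # rest) \<and> i < i'
        \<longrightarrow> col_step (T (i', j)) (T (i, j))) \<longleftrightarrow>
    (rest \<noteq> [] \<longrightarrow> col_step (T (2, s)) (T (1, s))) \<and>
    (\<forall>i i' j. (i, j) \<in> ribbon_boxes rest \<and> (i', j) \<in> ribbon_boxes rest \<and> i < i'
        \<longrightarrow> col_step (shift_down T (i', j)) (shift_down T (i, j)))"
    (is "?L \<longleftrightarrow> ?join \<and> ?low")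
proof
  assume L: ?L
  have ?join
  proof
    assume "rest \<noteq> []"
    then have "(1, s) \<in> ribbon_boxes rest"
      using ribbon_top_right_box[OF pos] unfolding s_def by blast
    then show "col_step (T (2, s)) (T (1, s))"
      using L[rule_format, of 1 s 2] x by (auto simp: mem_ribbon_boxes_Cons s_def)
  qed
  moreover have ?low
  proof (intro allI impI)
    fix i i' j assume "(i, j) \<in> ribbon_boxes rest \<and> (i', j) \<in> ribbon_boxes rest \<and> i < i'"
    then show "col_step (shift_down T (i', j)) (shift_down T (i, j))"
      using L[rule_format, of "Suc i" j "Suc i'"] ribbon_box_row_pos[of i j rest]
      by (auto simp: mem_ribbon_boxes_Cons)
  qed
  ultimately show "?join \<and> ?low" ..
next
  assume R: "?join \<and> ?low"
  show ?L
  proof (intro allI impI)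
    fix i i' j
    assume box: "(i, j) \<in> ribbon_boxes (x # rest) \<and> (i', j) \<in> ribbon_boxes (x # rest) \<and> i < i'"
    then have lower: "2 \<le> i'" "(i' - 1, j) \<in> ribbon_boxes rest"
      using ribbon_box_row_pos by (fastforce simp: mem_ribbon_boxes_Cons)+
    have T_i': "T (i', j) = shift_down T (i' - 1, j)"
      using lower by (simp add: Suc_diff_le)
    consider "i = 1" "s \<le> j" | "2 \<le> i" "(i - 1, j) \<in> ribbon_boxes rest"
      using box by (auto simp: mem_ribbon_boxes_Cons s_def)
    then show "col_step (T (i', j)) (T (i, j))"
    proof cases
      case 1
      have "j = s" using 1 ribbon_box_col_le[OF pos lower(2)] by (simp add: s_def)
      have join: "col_step (T (2, s)) (T (1, s))"
        using R lower by auto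
      show ?thesis
      proof (cases "i' = 2")
        case False
        have "rest \<noteq> []" using lower(2) by auto
        then have "(1, s) \<in> ribbon_boxes rest"
          using ribbon_top_right_box[OF pos] unfolding s_def by blast
        moreover have "1 < i' - 1" using False lower(1) by arith
        ultimately have "col_step (shift_down T (i' - 1, s)) (shift_down T (1, s))"
          using R lower(2) \<open>j = s\<close> by blast
        then have "col_step (T (i', s)) (T (2, s))"
          using T_i' \<open>j = s\<close> by (simp add: numeral_2_eq_2)
        then show ?thesis
          using join transp_col_step 1 \<open>j = s\<close> by (metis transpD)
      qed (use join 1 \<open>j = s\<close> in simp)
    next
      case 2
      have "i - 1 < i' - 1" using 2 box by arith
      with R lower 2 have "col_step (shift_down T (i' - 1, j)) (shift_down T (i - 1, j))"
        by blast
      with 2 T_i' show ?thesis by (simp add: Suc_diff_le)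
    qed
  qed
qed

lemma tableau_on_ribbon_Cons:
  fixes rest :: "nat list"
  assumes x: "0 < x" and pos: "\<forall>p\<in>set rest. 0 < p"
  defines "s \<equiv> ribbon_start rest 0"
  shows "tableau_on (ribbon_boxes (x # rest)) T \<longleftrightarrow>
    (\<forall>j. T (0, j) = 0) \<and> (\<forall>j. 0 < T (1, j) \<longleftrightarrow> s \<le> j \<and> j < s + x) \<and>
    sorted_wrt row_step (map (\<lambda>j. T (1, j)) [s..<s + x]) \<and>
    (rest \<noteq> [] \<longrightarrow> col_step (T (2, s)) (T (1, s))) \<and>
    tableau_on (ribbon_boxes rest) (shift_down T)"
  unfolding tableau_on_def support_ribbon_Cons rows_ribbon_Cons cols_ribbon_Cons[OF x pos] s_def
  by (simp only: conj_ac)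

fun ribbon_reading :: "nat list \<Rightarrow> (nat \<times> nat) list" where
  "ribbon_reading [] = []"
| "ribbon_reading (x # rest) = map (\<lambda>(i, j). (Suc i, j)) (ribbon_reading rest) @
     map (\<lambda>j. (1, j)) [ribbon_start rest 0..<ribbon_start rest 0 + x]"

lemma set_ribbon_reading: "set (ribbon_reading alpha) = ribbon_boxes alpha"
  by (induction alpha) (simp_all add: ribbon_boxes_Cons)

lemma distinct_ribbon_reading: "distinct (ribbon_reading alpha)"
proof (induction alpha)
  case (Cons x rest)
  have "(1, j) \<notin> (\<lambda>(i, j). (Suc i, j)) ` set (ribbon_reading rest)"
    and "(0, j) \<notin> set (ribbon_reading rest)" for j
    using ribbon_box_row_pos[of 0 j rest] by (auto simp: set_ribbon_reading)
  with Cons.IH show ?case by (auto simp: distinct_map inj_on_def)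
qed simp

lemma last_ribbon_reading: "0 < x \<Longrightarrow> last (ribbon_reading (x # rest)) = (1, ribbon_start (x # rest) 0)"
  by (cases x) (auto simp: ribbon_start_Cons_0 last_map)

lemma map_ribbon_reading_Cons:
  "map T (ribbon_reading (x # rest)) = map (shift_down T) (ribbon_reading rest) @
     map (\<lambda>j. T (1, j)) [ribbon_start rest 0..<ribbon_start rest 0 + x]"
proof -
  have "map (T \<circ> (\<lambda>(i, j). (Suc i, j))) (ribbon_reading rest) = map (shift_down T) (ribbon_reading rest)"
    using ribbon_box_row_pos by (intro map_cong) (auto simp: set_ribbon_reading)
  then show ?thesis by simp
qed

fun ribbon_word :: "nat list \<Rightarrow> nat list \<Rightarrow> bool" where
  "ribbon_word [] w \<longleftrightarrow> w = []"
| "ribbon_word (x # rest) w \<longleftrightarrow> (\<exists>u r. w = u @ r \<and> ribbon_word rest u \<and> length r = x \<and>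
     sorted_wrt row_step r \<and> (\<forall>v\<in>set r. 0 < v) \<and> (u \<noteq> [] \<longrightarrow> r \<noteq> [] \<longrightarrow> col_step (last u) (hd r)))"

lemma tableau_on_outside: "tableau_on B T \<Longrightarrow> b \<notin> B \<Longrightarrow> T b = 0"
  unfolding tableau_on_def by blast

lemma ribbon_word_of_tableau:
  "\<forall>p\<in>set alpha. 0 < p \<Longrightarrow> tableau_on (ribbon_boxes alpha) T \<Longrightarrow>
    ribbon_word alpha (map T (ribbon_reading alpha))"
proof (induction alpha arbitrary: T)
  case (Cons x rest)
  define s where "s = ribbon_start rest 0"
  have x: "0 < x" and pos: "\<forall>p\<in>set rest. 0 < p" using Cons.prems(1) by auto
  note T = Cons.prems(2)[unfolded tableau_on_ribbon_Cons[OF x pos], folded s_def]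
  define u where "u = map (shift_down T) (ribbon_reading rest)"
  define r where "r = map (\<lambda>j. T (1, j)) [s..<s + x]"
  have "ribbon_word rest u" using Cons.IH[OF pos] T by (simp add: u_def)
  moreover have "col_step (last u) (hd r)" if "u \<noteq> []"
  proof -
    obtain y rest' where rest: "rest = y # rest'" using \<open>u \<noteq> []\<close> by (cases rest) (auto simp: u_def)
    then have "last u = T (2, s)"
      using pos \<open>u \<noteq> []\<close> last_ribbon_reading[of y rest']
      by (simp add: u_def last_map s_def numeral_2_eq_2)
    moreover have "hd r = T (1, s)" using x by (simp add: r_def upt_conv_Cons)
    ultimately show ?thesis using T rest by simp
  qed
  moreover have "\<forall>v\<in>set r. 0 < v" "sorted_wrt row_step r" "length r = x"
    using T by (auto simp: r_def)
  moreover have "map T (ribbon_reading (x # rest)) = u @ r"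
    unfolding map_ribbon_reading_Cons u_def r_def s_def ..
  ultimately show ?case by auto
qed simp

lemma tableau_of_ribbon_word:
  "\<forall>p\<in>set alpha. 0 < p \<Longrightarrow> ribbon_word alpha w \<Longrightarrow>
    \<exists>T. tableau_on (ribbon_boxes alpha) T \<and> map T (ribbon_reading alpha) = w"
proof (induction alpha arbitrary: w)
  case Nil
  have "tableau_on {} (\<lambda>_. 0)" by (simp add: tableau_on_def)
  with Nil show ?case by auto
next
  case (Cons x rest)
  define s where "s = ribbon_start rest 0"
  have x: "0 < x" and pos: "\<forall>p\<in>set rest. 0 < p" using Cons.prems(1) by auto
  obtain u r where w: "w = u @ r" and u: "ribbon_word rest u" and r: "length r = x"
    "sorted_wrt row_step r" "\<forall>v\<in>set r. 0 < v" and join: "u \<noteq> [] \<Longrightarrow> r \<noteq> [] \<Longrightarrow> col_step (last u) (hd r)"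
    using Cons.prems(2) by auto
  obtain T' where T': "tableau_on (ribbon_boxes rest) T'" and u_T': "map T' (ribbon_reading rest) = u"
    using Cons.IH[OF pos u] by blast
  define T where "T = (\<lambda>(i, j). if i = 0 then 0 else if i = 1 then
      (if s \<le> j \<and> j < s + x then r ! (j - s) else 0) else T' (i - 1, j))"
  have "T' (0, j) = 0" for j
    using tableau_on_outside[OF T'] ribbon_box_row_pos[of 0 j rest] by auto
  then have shift: "shift_down T = T'"
    by (auto simp: shift_down_def T_def)
  have top: "map (\<lambda>j. T (1, j)) [s..<s + x] = r"
    using r(1) by (intro nth_equalityI) (auto simp: T_def)
  have top_pos: "0 < T (1, j) \<longleftrightarrow> s \<le> j \<and> j < s + x" for j
    using r(1,3) by (auto simp: T_def)
  have "col_step (T (2, s)) (T (1, s))" if ne: "rest \<noteq> []"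
  proof -
    obtain y rest' where rest: "rest = y # rest'" using ne by (cases rest) auto
    then have "u \<noteq> []" using pos u_T' by auto
    moreover have "last u = T (2, s)"
      using u_T' \<open>u \<noteq> []\<close> rest pos last_ribbon_reading[of y rest']
      by (auto simp: last_map T_def s_def)
    moreover have "r \<noteq> []" "hd r = T (1, s)"
      using r(1) x by (auto simp: T_def hd_conv_nth)
    ultimately show ?thesis using join by simp
  qed
  then have "tableau_on (ribbon_boxes (x # rest)) T"
    unfolding tableau_on_ribbon_Cons[OF x pos, folded s_def]
    using shift T' top top_pos r(2) by (simp add: T_def)
  moreover have "map T (ribbon_reading (x # rest)) = w"
    unfolding map_ribbon_reading_Cons[of T x rest, folded s_def] shift u_T' top w ..
  ultimately show ?case by blast
qed

lemma bij_betw_ribbon_reading: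
  assumes "\<forall>p\<in>set alpha. 0 < p"
  shows "bij_betw (\<lambda>T. map T (ribbon_reading alpha)) {T. tableau_on (ribbon_boxes alpha) T}
    {w. ribbon_word alpha w}"
proof (rule bij_betw_imageI)
  show "inj_on (\<lambda>T. map T (ribbon_reading alpha)) {T. tableau_on (ribbon_boxes alpha) T}"
  proof (rule inj_onI, rule ext)
    fix T1 T2 b
    assume "T1 \<in> {T. tableau_on (ribbon_boxes alpha) T}" "T2 \<in> {T. tableau_on (ribbon_boxes alpha) T}"
      and "map T1 (ribbon_reading alpha) = map T2 (ribbon_reading alpha)"
    then show "T1 b = T2 b"
      by (cases "b \<in> ribbon_boxes alpha")
        (auto simp: tableau_on_outside map_eq_conv set_ribbon_reading[symmetric])
  qed
  show "(\<lambda>T. map T (ribbon_reading alpha)) ` {T. tableau_on (ribbon_boxes alpha) T} =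
      {w. ribbon_word alpha w}"
    using ribbon_word_of_tableau[OF assms] tableau_of_ribbon_word[OF assms] by blast
qed

definition letter_count :: "nat list \<Rightarrow> nat \<Rightarrow> nat" where
  "letter_count w k = length (filter (\<lambda>v. (v + 1) div 2 = k) w)"

lemma filling_content_eq_letter_count:
  "filling_content alpha T k = letter_count (map T (ribbon_reading alpha)) k"
proof -
  have "filling_content alpha T k = card {b \<in> set (ribbon_reading alpha). (T b + 1) div 2 = k}"
    by (simp add: filling_content_def set_ribbon_reading)
  also have "\<dots> = letter_count (map T (ribbon_reading alpha)) k"
    using distinct_length_filter[OF distinct_ribbon_reading]
    by (simp add: letter_count_def filter_map o_def Collect_conj_eq Int_commute set_filter)
  finally show ?thesis .
qed

lemma ribbon_coeff_eq_card_words: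
  assumes "\<forall>p\<in>set alpha. 0 < p"
  shows "ribbon_coeff alpha a = card {w. ribbon_word alpha w \<and> (\<forall>k. letter_count w k = a k)}"
proof -
  have "bij_betw (\<lambda>T. map T (ribbon_reading alpha))
      {T \<in> {T. tableau_on (ribbon_boxes alpha) T}. \<forall>k. filling_content alpha T k = a k}
      {w \<in> {w. ribbon_word alpha w}. \<forall>k. letter_count w k = a k}"
    by (rule bij_betw_Collect[OF bij_betw_ribbon_reading[OF assms]])
      (simp add: filling_content_eq_letter_count)
  then show ?thesis
    unfolding ribbon_coeff_def is_filling_iff_tableau_on by (simp add: bij_betw_same_card)
qed

lemma sorted_wrt_snoc:
  assumes "transp P" and "xs \<noteq> []"
  shows "sorted_wrt P (xs @ [v]) \<longleftrightarrow> sorted_wrt P xs \<and> P (last xs) v"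
proof -
  have "P x v" if sorted: "sorted_wrt P xs" and last: "P (last xs) v" and x: "x \<in> set xs" for x
  proof -
    have "sorted_wrt P (butlast xs @ [last xs])" "x \<in> set (butlast xs @ [last xs])"
      using sorted x assms(2) by (simp_all add: append_butlast_last_id)
    then have "x = last xs \<or> P x (last xs)" by (auto simp: sorted_wrt_append)
    with last assms(1) show ?thesis by (metis transpD)
  qed
  then show ?thesis using assms(2) by (auto simp: sorted_wrt_append)
qed

lemma ribbon_word_length: "ribbon_word alpha w \<Longrightarrow> length w = sum_list alpha"
proof (induction alpha arbitrary: w)
  case (Cons x rest)
  then obtain u r where "w = u @ r" "ribbon_word rest u" "length r = x" by auto
  with Cons.IH show ?case by simp
qed simp

lemma ribbon_word_extend_row:
  assumes "0 < x"
  shows "ribbon_word (Suc x # rest) w \<longleftrightarrow>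
    (\<exists>w0 v. w = w0 @ [v] \<and> ribbon_word (x # rest) w0 \<and> 0 < v \<and> row_step (last w0) v)"
proof
  assume "ribbon_word (Suc x # rest) w"
  then obtain u r0 v where "w = u @ r0 @ [v]" "ribbon_word rest u" "length r0 = x"
    "sorted_wrt row_step (r0 @ [v])" "\<forall>v\<in>set (r0 @ [v]). 0 < v"
    "u \<noteq> [] \<Longrightarrow> col_step (last u) (hd (r0 @ [v]))"
    by (auto simp: length_Suc_conv_rev)
  moreover have "r0 \<noteq> []" using \<open>length r0 = x\<close> assms by auto
  ultimately show "\<exists>w0 v. w = w0 @ [v] \<and> ribbon_word (x # rest) w0 \<and> 0 < v \<and> row_step (last w0) v"
    by (intro exI[of _ "u @ r0"] exI[of _ v]) (auto simp: sorted_wrt_snoc[OF transp_row_step])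
next
  assume "\<exists>w0 v. w = w0 @ [v] \<and> ribbon_word (x # rest) w0 \<and> 0 < v \<and> row_step (last w0) v"
  then obtain u r0 v where "w = u @ r0 @ [v]" "ribbon_word rest u" "length r0 = x"
    "sorted_wrt row_step r0" "\<forall>v\<in>set r0. 0 < v" "0 < v" "row_step (last (u @ r0)) v"
    "u \<noteq> [] \<Longrightarrow> r0 \<noteq> [] \<Longrightarrow> col_step (last u) (hd r0)"
    by auto
  moreover have "r0 \<noteq> []" using \<open>length r0 = x\<close> assms by auto
  ultimately show "ribbon_word (Suc x # rest) w"
    by (simp only: ribbon_word.simps) (intro exI[of _ u] exI[of _ "r0 @ [v]"];
        simp add: sorted_wrt_snoc[OF transp_row_step])
qed

lemma ribbon_word_new_row:
  assumes "rest \<noteq> []" and "\<forall>p\<in>set rest. 0 < p"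
  shows "ribbon_word (1 # rest) w \<longleftrightarrow>
    (\<exists>w0 v. w = w0 @ [v] \<and> ribbon_word rest w0 \<and> 0 < v \<and> col_step (last w0) v)"
proof
  assume "ribbon_word (1 # rest) w"
  then obtain u v where "w = u @ [v]" "ribbon_word rest u" "0 < v" "u \<noteq> [] \<Longrightarrow> col_step (last u) v"
    by (auto simp: length_Suc_conv)
  moreover have "u \<noteq> []"
    using ribbon_word_length[OF \<open>ribbon_word rest u\<close>] assms by (cases rest) auto
  ultimately show "\<exists>w0 v. w = w0 @ [v] \<and> ribbon_word rest w0 \<and> 0 < v \<and> col_step (last w0) v"
    by blast
next
  assume "\<exists>w0 v. w = w0 @ [v] \<and> ribbon_word rest w0 \<and> 0 < v \<and> col_step (last w0) v"
  then obtain w0 v where "w = w0 @ [v]" "ribbon_word rest w0" "0 < v" "col_step (last w0) v"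
    by blast
  then show "ribbon_word (1 # rest) w"
    by (simp only: ribbon_word.simps) (intro exI[of _ w0] exI[of _ "[v]"]; simp)
qed

section \<open>Transfer recursion for words in the letters 1' 1 2' 2\<close>

text \<open>
  The letters 1' 1 2' 2 are 1 2 3 4, and \<open>count_high w\<close> is the exponent of x_2 in the monomial
  of w.
\<close>

definition two_letter_words :: "nat list \<Rightarrow> nat list set" where
  "two_letter_words alpha = {w. ribbon_word alpha w \<and> set w \<subseteq> {1..4}}"

definition count_high :: "nat list \<Rightarrow> nat" where
  "count_high w = length (filter (\<lambda>v. 3 \<le> v) w)"

definition end_weight :: "nat list \<Rightarrow> (nat \<Rightarrow> real) \<Rightarrow> nat \<Rightarrow> real" where
  "end_weight alpha g u = (\<Sum>w \<in> {w \<in> two_letter_words alpha. last w = u}. g (count_high w))"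

lemma finite_two_letter_words: "finite (two_letter_words alpha)"
proof (rule finite_subset)
  show "two_letter_words alpha \<subseteq> {w. set w \<subseteq> {1..4} \<and> length w = sum_list alpha}"
    by (auto simp: two_letter_words_def ribbon_word_length)
qed (rule finite_lists_length_eq, simp)

lemma last_two_letter_word:
  assumes "\<forall>p\<in>set alpha. 0 < p" and "alpha \<noteq> []" and "w \<in> two_letter_words alpha"
  shows "last w \<in> {1..4}"
proof -
  have "w \<noteq> []"
    using assms ribbon_word_length[of alpha w] by (cases alpha) (auto simp: two_letter_words_def)
  then have "last w \<in> set w" by simp
  with assms(3) show ?thesis unfolding two_letter_words_def by blast
qed

lemma sum_over_end_letters:
  assumes "\<forall>p\<in>set alpha. 0 < p" and "alpha \<noteq> []"
  shows "(\<Sum>w\<in>two_letter_words alpha. g (count_high w)) = (\<Sum>u\<in>{1..4}. end_weight alpha g u)"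
  unfolding end_weight_def using last_two_letter_word[OF assms]
  by (intro sum.group[symmetric]) (auto simp: finite_two_letter_words)

lemma end_weight_step:
  assumes step: "\<And>w. ribbon_word alpha' w \<longleftrightarrow>
      (\<exists>w0 v. w = w0 @ [v] \<and> ribbon_word alpha w0 \<and> 0 < v \<and> R (last w0) v)"
    and v: "v \<in> {1..4}" and pos: "\<forall>p\<in>set alpha. 0 < p" and ne: "alpha \<noteq> []"
  shows "end_weight alpha' g v =
    (\<Sum>u\<in>{1..4}. if R u v then end_weight alpha (\<lambda>k. g (k + (if 3 \<le> v then 1 else 0))) u else 0)"
proof -
  define d :: nat where "d = (if 3 \<le> v then 1 else 0)"
  define S where "S = {w0 \<in> two_letter_words alpha. R (last w0) v}"
  have ends_v: "{w \<in> two_letter_words alpha'. last w = v} = (\<lambda>w0. w0 @ [v]) ` S"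
    using v by (auto simp: S_def two_letter_words_def step)
  have "end_weight alpha' g v = (\<Sum>w0\<in>S. g (count_high w0 + d))"
    unfolding end_weight_def ends_v
    by (subst sum.reindex) (auto simp: inj_on_def count_high_def d_def)
  also have "\<dots> = (\<Sum>u\<in>{1..4}. \<Sum>w0\<in>{w0 \<in> S. last w0 = u}. g (count_high w0 + d))"
    using last_two_letter_word[OF pos ne]
    by (intro sum.group[symmetric]) (auto simp: S_def finite_two_letter_words)
  also have "\<dots> = (\<Sum>u\<in>{1..4}. if R u v then end_weight alpha (\<lambda>k. g (k + d)) u else 0)"
  proof (rule sum.cong[OF refl])
    fix u
    show "(\<Sum>w0\<in>{w0 \<in> S. last w0 = u}. g (count_high w0 + d)) =
      (if R u v then end_weight alpha (\<lambda>k. g (k + d)) u else 0)"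
    proof (cases "R u v")
      case True
      then have "{w0 \<in> S. last w0 = u} = {w \<in> two_letter_words alpha. last w = u}"
        by (auto simp: S_def)
      with True show ?thesis by (simp add: end_weight_def)
    next
      case False
      then have "{w0 \<in> S. last w0 = u} = {}" by (auto simp: S_def)
      with False show ?thesis by (simp only: sum.empty if_False)
    qed
  qed
  finally show ?thesis unfolding d_def .
qed

lemma sum_1_to_4: "(\<Sum>u\<in>{1..4::nat}. f u) = f 1 + f 2 + f 3 + f 4"
proof -
  have "{1..4::nat} = {1, 2, 3, 4}" by auto
  then show ?thesis by (simp add: add.assoc)
qed

lemma end_weight_extend_row:
  assumes x: "0 < x" and pos: "\<forall>p\<in>set rest. 0 < p"
  defines "E \<equiv> end_weight (x # rest)"
  shows "end_weight (Suc x # rest) g 1 = 0"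
    and "end_weight (Suc x # rest) g 2 = E g 1 + E g 2"
    and "end_weight (Suc x # rest) g 3 = E (\<lambda>k. g (k + 1)) 1 + E (\<lambda>k. g (k + 1)) 2"
    and "end_weight (Suc x # rest) g 4 =
      E (\<lambda>k. g (k + 1)) 1 + E (\<lambda>k. g (k + 1)) 2 + E (\<lambda>k. g (k + 1)) 3 + E (\<lambda>k. g (k + 1)) 4"
proof -
  have "end_weight (Suc x # rest) g v =
      (\<Sum>u\<in>{1..4}. if row_step u v then E (\<lambda>k. g (k + (if 3 \<le> v then 1 else 0))) u else 0)"
    if "v \<in> {1..4}" for v
    unfolding E_def using x pos that
    by (intro end_weight_step[OF ribbon_word_extend_row[OF x]]) auto
  from this[of 1] this[of 2] this[of 3] this[of 4] show
    "end_weight (Suc x # rest) g 1 = 0"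
    "end_weight (Suc x # rest) g 2 = E g 1 + E g 2"
    "end_weight (Suc x # rest) g 3 = E (\<lambda>k. g (k + 1)) 1 + E (\<lambda>k. g (k + 1)) 2"
    "end_weight (Suc x # rest) g 4 =
      E (\<lambda>k. g (k + 1)) 1 + E (\<lambda>k. g (k + 1)) 2 + E (\<lambda>k. g (k + 1)) 3 + E (\<lambda>k. g (k + 1)) 4"
    unfolding sum_1_to_4 by (simp_all add: row_step_def)
qed

lemma end_weight_new_row:
  assumes ne: "rest \<noteq> []" and pos: "\<forall>p\<in>set rest. 0 < p"
  defines "E \<equiv> end_weight rest"
  shows "end_weight (1 # rest) g 1 = E g 1 + E g 2 + E g 3 + E g 4"
    and "end_weight (1 # rest) g 2 = E g 3 + E g 4"
    and "end_weight (1 # rest) g 3 = E (\<lambda>k. g (k + 1)) 3 + E (\<lambda>k. g (k + 1)) 4"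
    and "end_weight (1 # rest) g 4 = 0"
proof -
  have "end_weight (1 # rest) g v =
      (\<Sum>u\<in>{1..4}. if col_step u v then E (\<lambda>k. g (k + (if 3 \<le> v then 1 else 0))) u else 0)"
    if "v \<in> {1..4}" for v
    unfolding E_def using that by (rule end_weight_step[OF ribbon_word_new_row[OF ne pos] _ pos ne])
  from this[of 1] this[of 2] this[of 3] this[of 4] show
    "end_weight (1 # rest) g 1 = E g 1 + E g 2 + E g 3 + E g 4"
    "end_weight (1 # rest) g 2 = E g 3 + E g 4"
    "end_weight (1 # rest) g 3 = E (\<lambda>k. g (k + 1)) 3 + E (\<lambda>k. g (k + 1)) 4"
    "end_weight (1 # rest) g 4 = 0"
    unfolding sum_1_to_4 by (simp_all add: col_step_def)
qed

lemma end_weight_single_box: "v \<in> {1..4} \<Longrightarrow> end_weight [1] g v = g (if 3 \<le> v then 1 else 0)"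
proof -
  assume v: "v \<in> {1..4}"
  then have "{w \<in> two_letter_words [1]. last w = v} = {[v]}"
    by (auto simp: two_letter_words_def length_Suc_conv)
  then show ?thesis by (simp add: end_weight_def count_high_def)
qed

lemma end_weight_zero: "end_weight alpha (\<lambda>k. 0) u = 0"
  by (simp add: end_weight_def)

lemma end_weight_uminus: "end_weight alpha (\<lambda>k. - f k) u = - end_weight alpha f u"
  by (simp add: end_weight_def sum_negf)

lemma end_weight_diff: "end_weight alpha (\<lambda>k. f k - h k) u = end_weight alpha f u - end_weight alpha h u"
  by (simp add: end_weight_def sum_subtractf)

definition delta :: "nat \<Rightarrow> nat \<Rightarrow> real" where
  "delta j k = of_bool (k = j)"

definition alt_sign :: "nat \<Rightarrow> real" where
  "alt_sign k = (-1) ^ k"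

definition alt_count :: "nat \<Rightarrow> real" where
  "alt_count k = real k * (-1) ^ (k + 1)"

lemma delta_0_Suc [simp]: "delta 0 (Suc k) = 0"
  by (simp add: delta_def)

lemma delta_Suc_Suc [simp]: "delta (Suc j) (Suc k) = delta j k"
  by (simp add: delta_def)

lemma alt_sign_Suc [simp]: "alt_sign (Suc k) = - alt_sign k"
  by (simp add: alt_sign_def)

lemma alt_count_Suc [simp]: "alt_count (Suc k) = alt_sign k - alt_count k"
  by (simp add: alt_sign_def alt_count_def algebra_simps)

definition ones_high_end :: "nat list \<Rightarrow> real" where
  "ones_high_end alpha = (if 2 \<le> hd alpha then 4 else if length alpha = 1 then 2 else 0)"

definition ones_low_end :: "nat list \<Rightarrow> real" where
  "ones_low_end alpha =
    8 * real (ribbon_corners alpha) - (if 2 \<le> length alpha \<and> last alpha = 1 then 4 else 0)"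

text \<open>
  For g = \<open>delta j\<close> the end weights count the words with exactly j letters from {2', 2};
  \<open>ones_high_end\<close> and \<open>ones_low_end\<close> count those with exactly one such letter whose last
  letter is 2', 2 resp. 1', 1. The alternating sums are only needed for the recursion of the
  \<open>alt_count\<close> sums, since shifting \<open>alt_count\<close> produces \<open>alt_sign\<close>.
\<close>

definition end_weight_invariant :: "nat list \<Rightarrow> bool" where
  "end_weight_invariant alpha \<longleftrightarrow>
    (let E = end_weight alpha in
      E (delta 0) 1 + E (delta 0) 2 = 2 \<and> E (delta 0) 3 = 0 \<and> E (delta 0) 4 = 0 \<and>
      E (delta 1) 3 + E (delta 1) 4 = ones_high_end alpha \<and>
      E (delta 1) 1 + E (delta 1) 2 = ones_low_end alpha \<and>
      E alt_sign 1 + E alt_sign 2 + E alt_sign 3 + E alt_sign 4 = 0 \<and>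
      E alt_sign 3 + E alt_sign 4 = 2 * (-1) ^ length alpha \<and>
      E alt_count 1 + E alt_count 2 + E alt_count 3 + E alt_count 4 =
        (if odd (sum_list alpha) then 2 * (-1) ^ (length alpha + 1) else 0))"

lemma end_weight_invariant_single_box: "end_weight_invariant [1]"
  by (simp add: end_weight_invariant_def end_weight_single_box[simplified] ribbon_corners_single_row
      delta_def alt_sign_def alt_count_def ones_high_end_def ones_low_end_def)

lemma end_weight_invariant_extend_row:
  assumes x: "0 < x" and pos: "\<forall>p\<in>set rest. 0 < p" and inv: "end_weight_invariant (x # rest)"
  shows "end_weight_invariant (Suc x # rest)"
proof -
  have high: "ones_high_end (Suc x # rest) = 4"
    using x by (simp add: ones_high_end_def)
  have "ribbon_corners (Suc x # rest) = ribbon_corners (x # rest)"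
    using ribbon_corners_Cons[OF x pos] ribbon_corners_Cons[of "Suc x" rest] pos by simp
  moreover have "last (Suc x # rest) = 1 \<longleftrightarrow> last (x # rest) = 1" if "rest \<noteq> []"
    using that by simp
  ultimately have low: "ones_low_end (Suc x # rest) = ones_low_end (x # rest)"
    by (cases rest) (simp_all add: ones_low_end_def)
  show ?thesis
    using inv unfolding end_weight_invariant_def Let_def
    by (simp add: end_weight_extend_row[OF x pos, simplified] end_weight_zero end_weight_uminus
        end_weight_diff high low)
      (auto simp: algebra_simps)
qed

lemma end_weight_invariant_new_row:
  assumes ne: "rest \<noteq> []" and pos: "\<forall>p\<in>set rest. 0 < p" and inv: "end_weight_invariant rest"
  shows "end_weight_invariant (1 # rest)"
proof -
  obtain y rest' where rest: "rest = y # rest'" using ne by (cases rest) auto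
  have high: "ones_high_end (1 # rest) = 0"
    using ne by (simp add: ones_high_end_def)
  have "ribbon_corners (1 # rest) = ribbon_corners rest + (if rest' \<noteq> [] \<and> y = 1 then 0 else 1)"
    using ribbon_corners_Cons[of 1 rest] pos rest by simp
  then have low: "ones_low_end (1 # rest) = ones_low_end rest + 2 * ones_high_end rest"
    using pos rest by (cases rest') (auto simp: ones_low_end_def ones_high_end_def)
  show ?thesis
    using inv unfolding end_weight_invariant_def Let_def
    by (simp add: end_weight_new_row[OF ne pos, simplified] end_weight_zero end_weight_uminus
        end_weight_diff high[simplified] low[simplified])
qed

lemma composition_induct:
  assumes "P [1]"
    and "\<And>x rest. 0 < x \<Longrightarrow> \<forall>p\<in>set rest. 0 < p \<Longrightarrow> P (x # rest) \<Longrightarrow> P (Suc x # rest)"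
    and "\<And>rest. rest \<noteq> [] \<Longrightarrow> \<forall>p\<in>set rest. 0 < p \<Longrightarrow> P rest \<Longrightarrow> P (1 # rest)"
  shows "alpha \<noteq> [] \<Longrightarrow> \<forall>p\<in>set alpha. 0 < p \<Longrightarrow> P alpha"
proof (induction alpha)
  case (Cons x rest)
  have pos: "\<forall>p\<in>set rest. 0 < p" using Cons.prems by simp
  have "P (Suc k # rest)" for k
  proof (induction k)
    case 0
    show ?case using assms(1,3) Cons.IH pos by (cases "rest = []") auto
  qed (use assms(2) pos in auto)
  then show ?case using Cons.prems by (metis Suc_pred list.set_intros(1))
qed simp

lemma end_weight_invariant_holds:
  "alpha \<noteq> [] \<Longrightarrow> \<forall>p\<in>set alpha. 0 < p \<Longrightarrow> end_weight_invariant alpha"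
  by (rule composition_induct[of end_weight_invariant, OF end_weight_invariant_single_box
        end_weight_invariant_extend_row end_weight_invariant_new_row])

lemma end_weight_invariant_sums:
  assumes "end_weight_invariant alpha"
  shows "(\<Sum>u\<in>{1..4}. end_weight alpha (delta 0) u) = 2"
    and "(\<Sum>u\<in>{1..4}. end_weight alpha (delta 1) u) = ones_low_end alpha + ones_high_end alpha"
    and "(\<Sum>u\<in>{1..4}. end_weight alpha alt_count u) =
      (if odd (sum_list alpha) then 2 * (-1) ^ (length alpha + 1) else 0)"
  using assms unfolding end_weight_invariant_def Let_def sum_1_to_4 by linarith+

section \<open>Power sums in two variables\<close>

definition coloured_part_sum :: "nat list \<Rightarrow> nat list \<Rightarrow> nat \<Rightarrow> nat" where
  "coloured_part_sum lam vs k = (\<Sum>i\<in>{i. i < length lam \<and> vs ! i = k}. lam ! i)"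

definition two_colourings :: "nat \<Rightarrow> nat list set" where
  "two_colourings m = {vs. length vs = m \<and> set vs \<subseteq> {1, 2}}"

text \<open>
  \<open>colour_weight lam g\<close> is the sum over j of g j times the coefficient of x_1^(n-j) x_2^j in
  p_lam, where n is the size of lam.
\<close>

definition colour_weight :: "nat list \<Rightarrow> (nat \<Rightarrow> real) \<Rightarrow> real" where
  "colour_weight lam g = (\<Sum>vs\<in>two_colourings (length lam). g (coloured_part_sum lam vs 2))"

lemma finite_two_colourings: "finite (two_colourings m)"
  using finite_lists_length_eq[of "{1, 2 :: nat}" m] by (simp add: two_colourings_def conj_commute)

lemma coloured_part_sum_Cons:
  "coloured_part_sum (p # lam) (v # vs) k = (if v = k then p else 0) + coloured_part_sum lam vs k"
proof -
  have "{i. i < length (p # lam) \<and> (v # vs) ! i = k} =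
      (if v = k then {0} else {}) \<union> Suc ` {i. i < length lam \<and> vs ! i = k}"
    by (auto simp: nth_Cons' image_iff less_Suc_eq_0_disj)
  then show ?thesis
    by (simp add: coloured_part_sum_def sum.union_disjoint sum.reindex)
qed

lemma two_colourings_Suc:
  "two_colourings (Suc m) = (\<lambda>vs. 1 # vs) ` two_colourings m \<union> (\<lambda>vs. 2 # vs) ` two_colourings m"
  by (auto simp: two_colourings_def length_Suc_conv image_iff)

lemma colour_weight_Nil: "colour_weight [] g = g 0"
proof -
  have "two_colourings 0 = {[]}" by (auto simp: two_colourings_def)
  then show ?thesis by (simp add: colour_weight_def coloured_part_sum_def)
qed

lemma colour_weight_Cons:
  "colour_weight (p # lam) g = colour_weight lam g + colour_weight lam (\<lambda>k. g (p + k))"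
  unfolding colour_weight_def length_Cons two_colourings_Suc
  by (subst sum.union_disjoint) (auto simp: finite_two_colourings sum.reindex coloured_part_sum_Cons)

lemma colour_weight_zero: "colour_weight lam (\<lambda>k. 0) = 0"
  by (simp add: colour_weight_def)

lemma colour_weight_uminus: "colour_weight lam (\<lambda>k. - f k) = - colour_weight lam f"
  by (simp add: colour_weight_def sum_negf)

lemma colour_weight_delta_0: "\<forall>p\<in>set lam. 0 < p \<Longrightarrow> colour_weight lam (delta 0) = 1"
proof (induction lam)
  case (Cons p lam)
  then have "(\<lambda>k. delta 0 (p + k)) = (\<lambda>k. 0)" by (auto simp: delta_def)
  with Cons show ?case by (simp add: colour_weight_Cons colour_weight_zero)
qed (simp add: colour_weight_Nil delta_def)

lemma colour_weight_delta_1: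
  "\<forall>p\<in>set lam. 0 < p \<Longrightarrow> colour_weight lam (delta 1) = real (count_list lam 1)"
proof (induction lam)
  case (Cons p lam)
  then have "(\<lambda>k. delta 1 (p + k)) = (if p = 1 then delta 0 else (\<lambda>k. 0))"
    by (auto simp: delta_def)
  with Cons show ?case by (simp add: colour_weight_Cons colour_weight_delta_0 colour_weight_zero)
qed (simp add: colour_weight_Nil delta_def)

lemma colour_weight_alt_sign: "\<forall>p\<in>set lam. odd p \<Longrightarrow> colour_weight lam alt_sign = of_bool (lam = [])"
proof (induction lam)
  case (Cons p lam)
  then have "(\<lambda>k. alt_sign (p + k)) = (\<lambda>k. - alt_sign k)" by (auto simp: alt_sign_def power_add)
  with Cons show ?case by (simp add: colour_weight_Cons colour_weight_uminus)
qed (simp add: colour_weight_Nil alt_sign_def)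

lemma colour_weight_alt_count:
  "\<forall>p\<in>set lam. odd p \<Longrightarrow> colour_weight lam alt_count = (if length lam = 1 then real (hd lam) else 0)"
proof (induction lam)
  case (Cons p lam)
  then have "(\<lambda>k. alt_count (p + k)) = (\<lambda>k. real p * alt_sign k - alt_count k)"
    by (auto simp: alt_count_def alt_sign_def power_add algebra_simps)
  then have "colour_weight lam (\<lambda>k. alt_count (p + k)) =
      real p * colour_weight lam alt_sign - colour_weight lam alt_count"
    by (simp add: colour_weight_def sum_subtractf sum_distrib_left)
  with Cons show ?case by (simp add: colour_weight_Cons colour_weight_alt_sign)
qed (simp add: colour_weight_Nil alt_count_def)

lemma coloured_part_sum_1_2:
  "length vs = length lam \<Longrightarrow> set vs \<subseteq> {1, 2} \<Longrightarrow>
    coloured_part_sum lam vs 1 + coloured_part_sum lam vs 2 = sum_list lam"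
proof (induction lam arbitrary: vs)
  case (Cons p lam)
  then obtain v vs' where "vs = v # vs'" "v = 1 \<or> v = 2" by (cases vs) auto
  with Cons show ?case by (auto simp: coloured_part_sum_Cons)
qed (simp add: coloured_part_sum_def)

lemma coloured_part_sum_pos:
  "i < length lam \<Longrightarrow> vs ! i = k \<Longrightarrow> 0 < lam ! i \<Longrightarrow> 0 < coloured_part_sum lam vs k"
  unfolding coloured_part_sum_def by (rule order.strict_trans2[OF _ member_le_sum]) auto

lemma coloured_part_sum_uncoloured:
  assumes "set vs \<subseteq> {1, 2}" and "length vs = length lam" and "k \<notin> {1, 2}"
  shows "coloured_part_sum lam vs k = 0"
proof -
  have "vs ! i \<noteq> k" if "i < length lam" for i
  proof -
    have "vs ! i \<in> set vs" using that assms(2) by simp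
    then show ?thesis using assms(1,3) by auto
  qed
  then show ?thesis by (auto simp: coloured_part_sum_def)
qed

definition exponent_x1_x2 :: "nat \<Rightarrow> nat \<Rightarrow> nat \<Rightarrow> nat" where
  "exponent_x1_x2 n j k = (if k = 1 then n - j else if k = 2 then j else 0)"

lemma exponent_x1_x2_eq_coloured_part_sum:
  assumes "vs \<in> two_colourings (length lam)"
  shows "(\<forall>k. exponent_x1_x2 (sum_list lam) j k = coloured_part_sum lam vs k) \<longleftrightarrow>
    coloured_part_sum lam vs 2 = j"
proof
  assume "\<forall>k. exponent_x1_x2 (sum_list lam) j k = coloured_part_sum lam vs k"
  from this[rule_format, of 2] show "coloured_part_sum lam vs 2 = j"
    by (simp add: exponent_x1_x2_def)
next
  assume j: "coloured_part_sum lam vs 2 = j"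
  have colours: "length vs = length lam" "set vs \<subseteq> {1, 2}"
    using assms by (auto simp: two_colourings_def)
  show "\<forall>k. exponent_x1_x2 (sum_list lam) j k = coloured_part_sum lam vs k"
  proof
    fix k :: nat
    consider "k = 1" | "k = 2" | "k \<notin> {1, 2}" by blast
    then show "exponent_x1_x2 (sum_list lam) j k = coloured_part_sum lam vs k"
    proof cases
      case 1
      then show ?thesis using coloured_part_sum_1_2[OF colours] j by (simp add: exponent_x1_x2_def)
    next
      case 3
      then show ?thesis
        using coloured_part_sum_uncoloured[OF colours(2,1)] by (auto simp: exponent_x1_x2_def)
    qed (simp add: exponent_x1_x2_def j)
  qed
qed

lemma power_sum_coeff_exponent_x1_x2:
  assumes pos: "\<forall>p\<in>set lam. 0 < p"
  shows "power_sum_coeff lam (exponent_x1_x2 (sum_list lam) j) =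
    card {vs \<in> two_colourings (length lam). coloured_part_sum lam vs 2 = j}"
proof -
  have colours: "set vs \<subseteq> {1, 2}"
    if "length vs = length lam" "\<forall>k. exponent_x1_x2 (sum_list lam) j k = coloured_part_sum lam vs k"
    for vs
  proof
    fix v assume "v \<in> set vs"
    then obtain i where i: "i < length vs" "vs ! i = v" by (auto simp: in_set_conv_nth)
    then have "0 < coloured_part_sum lam vs v"
      using pos that(1) by (intro coloured_part_sum_pos) auto
    then have "exponent_x1_x2 (sum_list lam) j v \<noteq> 0" using that(2) by simp
    then show "v \<in> {1, 2}" by (auto simp: exponent_x1_x2_def split: if_splits)
  qed
  have "{vs. length vs = length lam \<and> (\<forall>v\<in>set vs. 1 \<le> v) \<and>
      (\<forall>k. exponent_x1_x2 (sum_list lam) j k = coloured_part_sum lam vs k)} =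
    {vs \<in> two_colourings (length lam). coloured_part_sum lam vs 2 = j}"
  proof (intro set_eqI iffI)
    fix vs
    assume "vs \<in> {vs. length vs = length lam \<and> (\<forall>v\<in>set vs. 1 \<le> v) \<and>
      (\<forall>k. exponent_x1_x2 (sum_list lam) j k = coloured_part_sum lam vs k)}"
    with colours exponent_x1_x2_eq_coloured_part_sum[of vs lam j]
    show "vs \<in> {vs \<in> two_colourings (length lam). coloured_part_sum lam vs 2 = j}"
      by (simp add: two_colourings_def)
  next
    fix vs
    assume "vs \<in> {vs \<in> two_colourings (length lam). coloured_part_sum lam vs 2 = j}"
    with exponent_x1_x2_eq_coloured_part_sum[of vs lam j]
    show "vs \<in> {vs. length vs = length lam \<and> (\<forall>v\<in>set vs. 1 \<le> v) \<and>
      (\<forall>k. exponent_x1_x2 (sum_list lam) j k = coloured_part_sum lam vs k)}"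
      by (auto simp: two_colourings_def)
  qed
  then show ?thesis
    unfolding power_sum_coeff_def coloured_part_sum_def[symmetric] by (rule arg_cong[where f = card])
qed

lemma letter_count_two_letter_word:
  "set w \<subseteq> {1..4} \<Longrightarrow> letter_count w k = exponent_x1_x2 (length w) (count_high w) k"
proof (induction w)
  case (Cons v w)
  have "count_high w \<le> length w" unfolding count_high_def by (rule length_filter_le)
  moreover have "v = 1 \<or> v = 2 \<or> v = 3 \<or> v = 4" using Cons.prems by auto
  ultimately show ?case
    using Cons by (auto simp: letter_count_def count_high_def exponent_x1_x2_def Suc_diff_le)
qed (simp add: letter_count_def count_high_def exponent_x1_x2_def)

lemma words_of_exponent_x1_x2:
  "{w. ribbon_word alpha w \<and> (\<forall>k. letter_count w k = exponent_x1_x2 (sum_list alpha) j k)} =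
    {w \<in> two_letter_words alpha. count_high w = j}"
proof (intro set_eqI iffI)
  fix w
  assume "w \<in> {w. ribbon_word alpha w \<and> (\<forall>k. letter_count w k = exponent_x1_x2 (sum_list alpha) j k)}"
  then have word: "ribbon_word alpha w"
    and count: "\<And>k. letter_count w k = exponent_x1_x2 (sum_list alpha) j k"
    by auto
  have letters: "set w \<subseteq> {1..4}"
  proof
    fix v assume "v \<in> set w"
    then have "0 < letter_count w ((v + 1) div 2)"
      unfolding letter_count_def by (intro length_pos_if_in_set[of v]) simp
    then have "(v + 1) div 2 \<in> {1, 2}" using count by (auto simp: exponent_x1_x2_def split: if_splits)
    then show "v \<in> {1..4}" by auto
  qed
  moreover have "count_high w = j"
    using count[of 2] letter_count_two_letter_word[OF letters, of 2] by (simp add: exponent_x1_x2_def)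
  ultimately show "w \<in> {w \<in> two_letter_words alpha. count_high w = j}"
    using word by (simp add: two_letter_words_def)
next
  fix w assume "w \<in> {w \<in> two_letter_words alpha. count_high w = j}"
  then show
    "w \<in> {w. ribbon_word alpha w \<and> (\<forall>k. letter_count w k = exponent_x1_x2 (sum_list alpha) j k)}"
    by (auto simp: two_letter_words_def letter_count_two_letter_word ribbon_word_length)
qed

lemma sum_comp_by_fibres:
  fixes f :: "'a \<Rightarrow> nat" and g :: "nat \<Rightarrow> real"
  assumes "finite A" and "\<forall>x\<in>A. f x \<le> n"
  shows "(\<Sum>x\<in>A. g (f x)) = (\<Sum>j\<le>n. g j * real (card {x \<in> A. f x = j}))"
proof -
  have "(\<Sum>x\<in>A. g (f x)) = (\<Sum>j\<le>n. \<Sum>x\<in>{x \<in> A. f x = j}. g (f x))"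
    using assms by (intro sum.group[symmetric]) auto
  also have "\<dots> = (\<Sum>j\<le>n. g j * real (card {x \<in> A. f x = j}))"
    by (intro sum.cong) auto
  finally show ?thesis .
qed

lemma odd_partition_pos: "lam \<in> odd_partitions n \<Longrightarrow> \<forall>p\<in>set lam. 0 < p"
  by (auto simp: odd_partitions_def intro: odd_pos)

lemma finite_odd_partitions: "finite (odd_partitions n)"
proof (rule finite_subset)
  show "odd_partitions n \<subseteq> {lam. set lam \<subseteq> {..n} \<and> length lam \<le> n}"
  proof
    fix lam assume lam: "lam \<in> odd_partitions n"
    have "length lam \<le> sum_list lam"
      using odd_partition_pos[OF lam] by (induction lam) auto
    then show "lam \<in> {lam. set lam \<subseteq> {..n} \<and> length lam \<le> n}"
      using lam member_le_sum_list[of _ lam] by (auto simp: odd_partitions_def)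
  qed
qed (rule finite_lists_length_le, simp)

lemma odd_partition_single_part:
  assumes "lam \<in> odd_partitions n"
  shows "length lam = 1 \<longleftrightarrow> lam = [n]"
proof
  assume "length lam = 1"
  then obtain p where "lam = [p]" by (auto simp: length_Suc_conv)
  with assms show "lam = [n]" by (simp add: odd_partitions_def)
qed simp

lemma p_expansion_colour_weight:
  assumes ne: "alpha \<noteq> []" and pos: "\<forall>p\<in>set alpha. 0 < p" and exp: "is_p_expansion alpha c"
  shows "(\<Sum>lam\<in>odd_partitions (sum_list alpha). c lam * colour_weight lam g) =
    (\<Sum>u\<in>{1..4}. end_weight alpha g u)"
proof -
  define n where "n = sum_list alpha"
  define N where "N j = real (card {w \<in> two_letter_words alpha. count_high w = j})" for j
  define M where
    "M lam j = real (card {vs \<in> two_colourings (length lam). coloured_part_sum lam vs 2 = j})"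
    for lam j
  have coeff: "N j = (\<Sum>lam\<in>odd_partitions n. c lam * M lam j)" for j
  proof -
    have "finite {k. exponent_x1_x2 n j k \<noteq> 0}"
      by (rule finite_subset[of _ "{1, 2}"]) (auto simp: exponent_x1_x2_def split: if_splits)
    then have "real (ribbon_coeff alpha (exponent_x1_x2 n j)) =
        (\<Sum>lam\<in>odd_partitions n. c lam * real (power_sum_coeff lam (exponent_x1_x2 n j)))"
      using exp unfolding is_p_expansion_def n_def by blast
    moreover have "power_sum_coeff lam (exponent_x1_x2 n j) = M lam j" if "lam \<in> odd_partitions n" for lam
      using that power_sum_coeff_exponent_x1_x2[OF odd_partition_pos[OF that]]
      by (simp add: M_def odd_partitions_def)
    ultimately show ?thesis
      using ribbon_coeff_eq_card_words[OF pos] words_of_exponent_x1_x2[of alpha j]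
      by (simp add: N_def n_def)
  qed
  have colour: "colour_weight lam g = (\<Sum>j\<le>n. g j * M lam j)" if "lam \<in> odd_partitions n" for lam
  proof -
    have "\<forall>vs\<in>two_colourings (length lam). coloured_part_sum lam vs 2 \<le> n"
      using coloured_part_sum_1_2[of _ lam] that by (fastforce simp: two_colourings_def odd_partitions_def)
    then show ?thesis
      unfolding colour_weight_def M_def by (rule sum_comp_by_fibres[OF finite_two_colourings])
  qed
  have "\<forall>w\<in>two_letter_words alpha. count_high w \<le> n"
    by (auto simp: two_letter_words_def count_high_def n_def ribbon_word_length[symmetric]
        intro: order.trans[OF length_filter_le])
  then have "(\<Sum>w\<in>two_letter_words alpha. g (count_high w)) = (\<Sum>j\<le>n. g j * N j)"
    unfolding N_def by (rule sum_comp_by_fibres[OF finite_two_letter_words])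
  also have "\<dots> = (\<Sum>lam\<in>odd_partitions n. \<Sum>j\<le>n. c lam * (g j * M lam j))"
    by (simp add: coeff sum_distrib_left algebra_simps sum.swap[of _ "odd_partitions n"])
  also have "\<dots> = (\<Sum>lam\<in>odd_partitions n. c lam * colour_weight lam g)"
    by (intro sum.cong) (simp_all add: colour sum_distrib_left)
  finally show ?thesis
    using sum_over_end_letters[OF pos ne] by (simp add: n_def)
qed

section \<open>The coefficient identities\<close>

lemma p_expansion_coeff_sum:
  assumes ne: "alpha \<noteq> []" and pos: "\<forall>p\<in>set alpha. 0 < p" and exp: "is_p_expansion alpha c"
  shows "(\<Sum>lam\<in>odd_partitions (sum_list alpha). c lam) = 2"
proof -
  have "(\<Sum>lam\<in>odd_partitions (sum_list alpha). c lam) =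
      (\<Sum>lam\<in>odd_partitions (sum_list alpha). c lam * colour_weight lam (delta 0))"
    by (intro sum.cong) (simp_all add: colour_weight_delta_0[OF odd_partition_pos])
  also have "\<dots> = 2"
    using p_expansion_colour_weight[OF assms]
      end_weight_invariant_sums(1)[OF end_weight_invariant_holds[OF ne pos]]
    by simp
  finally show ?thesis .
qed

lemma p_expansion_single_part_coeff:
  assumes ne: "alpha \<noteq> []" and pos: "\<forall>p\<in>set alpha. 0 < p" and exp: "is_p_expansion alpha c"
    and odd: "odd (sum_list alpha)"
  shows "c [sum_list alpha] = (-1) ^ (length alpha + 1) * 2 / real (sum_list alpha)"
proof -
  define n where "n = sum_list alpha"
  have "[n] \<in> odd_partitions n" using odd by (simp add: odd_partitions_def n_def)
  have "(\<Sum>lam\<in>odd_partitions n. c lam * colour_weight lam alt_count) =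
      (\<Sum>lam\<in>odd_partitions n. if lam = [n] then c [n] * real n else 0)"
  proof (rule sum.cong)
    fix lam assume lam: "lam \<in> odd_partitions n"
    then have "\<forall>p\<in>set lam. odd p" by (simp add: odd_partitions_def)
    then show "c lam * colour_weight lam alt_count = (if lam = [n] then c [n] * real n else 0)"
      using odd_partition_single_part[OF lam] by (auto simp: colour_weight_alt_count)
  qed simp
  also have "\<dots> = c [n] * real n"
    using \<open>[n] \<in> odd_partitions n\<close> by (simp add: finite_odd_partitions)
  finally have "c [n] * real n = 2 * (-1) ^ (length alpha + 1)"
    using p_expansion_colour_weight[OF ne pos exp]
      end_weight_invariant_sums(3)[OF end_weight_invariant_holds[OF ne pos]] odd
    by (simp add: n_def)
  moreover have "n \<noteq> 0" using odd unfolding n_def by (metis odd_pos less_irrefl)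
  ultimately have "c [n] = (-1) ^ (length alpha + 1) * 2 / real n"
    by (simp add: field_simps)
  then show ?thesis by (simp add: n_def)
qed

lemma p_expansion_count_ones:
  assumes ne: "alpha \<noteq> []" and pos: "\<forall>p\<in>set alpha. 0 < p" and exp: "is_p_expansion alpha c"
  shows "(\<Sum>lam\<in>odd_partitions (sum_list alpha). real (count_list lam 1) * c lam) =
    ones_low_end alpha + ones_high_end alpha"
proof -
  have "(\<Sum>lam\<in>odd_partitions (sum_list alpha). real (count_list lam 1) * c lam) =
      (\<Sum>lam\<in>odd_partitions (sum_list alpha). c lam * colour_weight lam (delta 1))"
    by (intro sum.cong) (simp_all add: colour_weight_delta_1[OF odd_partition_pos, simplified])
  also have "\<dots> = ones_low_end alpha + ones_high_end alpha"
    using p_expansion_colour_weight[OF assms]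
      end_weight_invariant_sums(2)[OF end_weight_invariant_holds[OF ne pos]]
    by simp
  finally show ?thesis .
qed

theorem mainTheorem14:
  fixes alpha :: "nat list" and c :: "nat list \<Rightarrow> real"
  assumes "alpha \<noteq> []" and "\<forall>p\<in>set alpha. 0 < p"
    and "is_p_expansion alpha c"
  shows "(\<Sum>lam\<in>odd_partitions (sum_list alpha). c lam) = 2
    \<and> (odd (sum_list alpha) \<longrightarrow>
         c [sum_list alpha] = (-1) ^ (length alpha + 1) * 2 / real (sum_list alpha))
    \<and> (alpha ! 0 = 1 \<and> alpha ! (length alpha - 1) > 1 \<longrightarrow>
         (\<Sum>lam\<in>odd_partitions (sum_list alpha). real (count_list lam 1) * c lam)
           = 8 * real (ribbon_corners alpha))
    \<and> (alpha ! 0 = 1 \<and> alpha ! (length alpha - 1) = 1 \<and> sum_list alpha \<ge> 2 \<longrightarrow>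
         (\<Sum>lam\<in>odd_partitions (sum_list alpha). real (count_list lam 1) * c lam)
           = 8 * real (ribbon_corners alpha) - 4)"
proof -
  have ends: "alpha ! 0 = hd alpha" "alpha ! (length alpha - 1) = last alpha"
    using assms(1) by (simp_all add: hd_conv_nth last_conv_nth)
  have long: "2 \<le> length alpha" if "hd alpha = 1" "last alpha \<noteq> 1 \<or> 2 \<le> sum_list alpha"
    using that assms(1) by (cases alpha rule: remdups_adj.cases) auto
  show ?thesis
    unfolding ends
    using p_expansion_coeff_sum[OF assms] p_expansion_single_part_coeff[OF assms]
      p_expansion_count_ones[OF assms] long
    by (auto simp: ones_low_end_def ones_high_end_def)
qed

end
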